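(* (i) For every integer $n\ge 0$, $D_{n,3}(1,\tfrac14)=\dfrac{3n-1}{2^n}$ in $\mathbb{F}_q$, and for every $y\in\mathbb{F}_{q^2}$ with $y\ne\tfrac12$, $$D_{n,3}(1,y(1-y))=\frac{(2-y)y^n-(y+1)(1-y)^n}{2y-1}.$$ (ii) If $n_1,n_2$ are positive integers with $n_1\equiv n_2\pmod{q^2-1}$, then $D_{n_1,3}(1,x_0)=D_{n_2,3}(1,x_0)$ for every $x_0\in\mathbb{F}_q\setminus\{\tfrac14\}$.
   Context: Let $p>3$ be prime, $q=p^e$ ($e\ge1$), $\mathbb{F}_q$ the field with $q$ elements and $\mathbb{F}_{q^2}$ its quadratic extension. For $n\ge 1$ and $a\in\mathbb{F}_q$, $D_{n,3}(a,x)=\sum_{i=0}^{\lfloor n/2\rfloor}\frac{n-3i}{n-i}\binom{n-i}{i}(-x)^i a^{n-2i}$, where each coefficient $\frac{n-3i}{n-i}\binom{n-i}{i}$ is an integer read modulo $p$; and $D_{0,3}(a,x)=-1$. The polynomial $D_{n,3}(1,x)\in\mathbb{F}_q[x]$ is evaluated at elements of $\mathbb{F}_{q^2}$. *)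

theory Defs
  imports Main "HOL-Number_Theory.Cong"
begin

text \<open>The integer coefficient (n-3i)/(n-i) * binom(n-i, i), for 1 <= n and i <= n div 2.
  The quotient is exact, so integer division computes it.\<close>
definition D3coeff :: "nat \<Rightarrow> nat \<Rightarrow> int" where
  "D3coeff n i = ((int n - 3 * int i) * int ((n - i) choose i)) div int (n - i)"

definition D3 :: "nat \<Rightarrow> 'a::comm_ring_1 \<Rightarrow> 'a \<Rightarrow> 'a" where
  "D3 n a x = (if n = 0 then -1
     else (\<Sum>i\<le>n div 2. of_int (D3coeff n i) * (-x) ^ i * a ^ (n - 2 * i)))"

end

theory Submission
  imports Defs "HOL-Computational_Algebra.Polynomial" "HOL-Number_Theory.Residues"
begin

text \<open>Write \<open>D n\<close> for \<open>D_{n,3}(1,x)\<close>. Its coefficients are \<open>C(n-i,i) - 2 C(n-i-1,i-1)\<close>,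
  so \<open>D (n+2) = F(n+3) + 2x F(n+1)\<close> for the Fibonacci polynomials \<open>F\<close> evaluated at \<open>-x\<close>.
  Hence \<open>D (n+2) = D (n+1) - x D n\<close> with \<open>D 0 = -1\<close>, \<open>D 1 = 1\<close>, and both closed forms of (i)
  satisfy the same recurrence. For (ii), the discriminant \<open>1 - 4x\<^sub>0\<close> lies in \<open>F_q\<close>, hence is a
  square \<open>s\<^sup>2\<close> in \<open>F_{q^2}\<close> (Euler's criterion), so \<open>x\<^sub>0 = y(1-y)\<close> with \<open>y = (1+s)/2\<close>.
  By (i), \<open>D n\<close> is then a fixed combination of \<open>y\<^sup>n\<close> and \<open>(1-y)\<^sup>n\<close>, which for \<open>n > 0\<close>
  depend only on \<open>n\<close> modulo \<open>q\<^sup>2 - 1\<close>.\<close>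

text \<open>\<open>fibonacci_poly t m\<close> is the Fibonacci polynomial \<open>F(m+1)\<close> at \<open>t\<close>, with \<open>F 1 = F 2 = 1\<close>.\<close>

definition fibonacci_poly :: "'a::comm_ring_1 \<Rightarrow> nat \<Rightarrow> 'a" where
  "fibonacci_poly t m = (\<Sum>i\<le>m. of_nat ((m - i) choose i) * t ^ i)"

lemma fibonacci_poly_0 [simp]: "fibonacci_poly t 0 = 1"
  and fibonacci_poly_1 [simp]: "fibonacci_poly t (Suc 0) = 1"
  by (simp_all add: fibonacci_poly_def)

lemma fibonacci_poly_conv_half_sum:
  "fibonacci_poly t m = (\<Sum>i\<le>m div 2. of_nat ((m - i) choose i) * t ^ i)"
  unfolding fibonacci_poly_def
  by (intro sum.mono_neutral_right ballI) (auto simp: binomial_eq_0)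

lemma fibonacci_poly_Suc_Suc:
  "fibonacci_poly t (Suc (Suc n)) = fibonacci_poly t (Suc n) + t * fibonacci_poly t n"
proof -
  have "fibonacci_poly t (Suc (Suc n)) = 1 + (\<Sum>i\<le>Suc n. of_nat ((Suc n - i) choose Suc i) * t ^ Suc i)"
    unfolding fibonacci_poly_def by (subst sum.atMost_Suc_shift) simp
  also have "\<dots> = 1 + (\<Sum>i\<le>n. of_nat (Suc (n - i) choose Suc i) * t ^ Suc i)"
    by (simp add: Suc_diff_le)
  also have "\<dots> = 1 + (\<Sum>i\<le>n. of_nat ((n - i) choose Suc i) * t ^ Suc i)
                     + (\<Sum>i\<le>n. of_nat ((n - i) choose i) * t ^ Suc i)"
    by (simp add: sum.distrib algebra_simps)
  also have "1 + (\<Sum>i\<le>n. of_nat ((n - i) choose Suc i) * t ^ Suc i) = fibonacci_poly t (Suc n)"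
    unfolding fibonacci_poly_def by (subst sum.atMost_Suc_shift) simp
  finally show ?thesis
    by (simp add: fibonacci_poly_def sum_distrib_left mult_ac)
qed

lemma D3coeff_0: "n > 0 \<Longrightarrow> D3coeff n 0 = 1"
  by (simp add: D3coeff_def)

lemma D3coeff_Suc:
  assumes "Suc k \<le> n div 2"
  shows "D3coeff n (Suc k) = int ((n - Suc k) choose Suc k) - 2 * int ((n - Suc k - 1) choose k)"
proof -
  define m where "m = n - Suc k"
  have m: "m > 0" "int n - 3 * int (Suc k) = int m - 2 * int (Suc k)"
    using assms by (auto simp: m_def)
  have "int (Suc k) * int (m choose Suc k) = int m * int ((m - 1) choose k)"
    by (metis binomial_absorption of_nat_mult)
  then have "(int n - 3 * int (Suc k)) * int (m choose Suc k)
      = int m * (int (m choose Suc k) - 2 * int ((m - 1) choose k))"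
    unfolding m(2) by (simp add: algebra_simps)
  then show ?thesis
    using m by (simp add: D3coeff_def m_def[symmetric])
qed

lemma D3_Suc_Suc_conv_fibonacci_poly:
  "D3 (Suc (Suc n)) (1::'a::comm_ring_1) x
     = fibonacci_poly (-x) (Suc (Suc n)) + 2 * x * fibonacci_poly (-x) n"
proof -
  have half: "Suc (Suc n) div 2 = Suc (n div 2)" by simp
  have "D3 (Suc (Suc n)) (1::'a) x
      = 1 + (\<Sum>i\<le>n div 2. of_int (D3coeff (Suc (Suc n)) (Suc i)) * (-x) ^ Suc i)"
    unfolding D3_def half by (subst sum.atMost_Suc_shift) (simp add: D3coeff_0)
  also have "\<dots> = 1 + (\<Sum>i\<le>n div 2. of_nat (Suc (n - i) choose Suc i) * (-x) ^ Suc i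
      - 2 * (-x) * (of_nat ((n - i) choose i) * (-x) ^ i))"
    by (intro arg_cong2[where f = "(+)"] refl sum.cong) (simp add: D3coeff_Suc Suc_diff_le algebra_simps)
  also have "\<dots> = 1 + (\<Sum>i\<le>n div 2. of_nat (Suc (n - i) choose Suc i) * (-x) ^ Suc i)
      - 2 * (-x) * (\<Sum>i\<le>n div 2. of_nat ((n - i) choose i) * (-x) ^ i)"
    by (simp only: sum_subtractf sum_distrib_left add_diff_eq)
  also have "1 + (\<Sum>i\<le>n div 2. of_nat (Suc (n - i) choose Suc i) * (-x) ^ Suc i)
      = fibonacci_poly (-x) (Suc (Suc n))"
    unfolding fibonacci_poly_conv_half_sum[of _ "Suc (Suc n)"] half
    by (subst sum.atMost_Suc_shift) (simp add: Suc_diff_le)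
  finally show ?thesis
    by (simp add: fibonacci_poly_conv_half_sum)
qed

lemma D3_0 [simp]: "D3 0 a x = -1"
  by (simp add: D3_def)

lemma D3_1 [simp]: "D3 (Suc 0) (1::'a::comm_ring_1) x = 1"
  by (simp add: D3_def D3coeff_def)

lemma D3_Suc_Suc:
  "D3 (Suc (Suc n)) (1::'a::comm_ring_1) x = D3 (Suc n) 1 x - x * D3 n 1 x"
proof (cases n)
  case 0
  then show ?thesis
    by (simp add: D3_Suc_Suc_conv_fibonacci_poly fibonacci_poly_Suc_Suc)
next
  case (Suc k)
  then show ?thesis
    by (cases k) (simp_all add: D3_Suc_Suc_conv_fibonacci_poly fibonacci_poly_Suc_Suc algebra_simps)
qed

lemma linear_recurrence_eqI:
  fixes f g :: "nat \<Rightarrow> 'a::comm_ring_1"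
  assumes "f 0 = g 0" "f (Suc 0) = g (Suc 0)"
    and "\<And>n. f (Suc (Suc n)) = f (Suc n) - x * f n"
    and "\<And>n. g (Suc (Suc n)) = g (Suc n) - x * g n"
  shows "f n = g n"
  by (induction n rule: induct_nat_012) (simp_all add: assms)

lemma D3_one_quarter:
  assumes "(2::'a::field) \<noteq> 0"
  shows "D3 n (1::'a) (1/4) = of_int (3 * int n - 1) / 2 ^ n"
proof (rule linear_recurrence_eqI[where x = "1/4"])
  fix n
  show "of_int (3 * int (Suc (Suc n)) - 1) / 2 ^ Suc (Suc n) =
        of_int (3 * int (Suc n) - 1) / 2 ^ Suc n - 1/4 * (of_int (3 * int n - 1) / (2::'a) ^ n)"
  proof -
    have "(of_int (3 * int (Suc (Suc n)) - 1) :: 'a)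
        = 2 * of_int (3 * int (Suc n) - 1) - of_int (3 * int n - 1)"
      by simp
    moreover have "(4::'a) \<noteq> 0" "(8::'a) \<noteq> 0"
      using assms by (metis mult_2 mult_eq_0_iff numeral_Bit0)+
    ultimately show ?thesis
      using assms by (simp only:) (simp add: field_simps)
  qed
qed (use assms in \<open>simp_all add: D3_Suc_Suc\<close>)

lemma D3_mult_one_minus:
  assumes "2 * y \<noteq> (1::'a::field)"
  shows "D3 n 1 (y * (1 - y)) = ((2 - y) * y ^ n - (y + 1) * (1 - y) ^ n) / (2 * y - 1)"
proof (rule linear_recurrence_eqI[where x = "y * (1 - y)"])
  fix n
  show "((2 - y) * y ^ Suc (Suc n) - (y + 1) * (1 - y) ^ Suc (Suc n)) / (2 * y - 1) =
      ((2 - y) * y ^ Suc n - (y + 1) * (1 - y) ^ Suc n) / (2 * y - 1) -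
      y * (1 - y) * (((2 - y) * y ^ n - (y + 1) * (1 - y) ^ n) / (2 * y - 1))"
    using assms by (simp add: divide_simps) (simp add: algebra_simps)
qed (use assms in \<open>simp_all add: D3_Suc_Suc field_simps\<close>)

lemma power_card_minus_one_eq_1:
  fixes z :: "'a::{field,finite}"
  assumes "z \<noteq> 0"
  shows "z ^ (card (UNIV::'a set) - 1) = 1"
proof -
  let ?G = "UNIV - {0::'a}"
  have "(\<Prod>w\<in>?G. w) = (\<Prod>w\<in>?G. z * w)"
    by (rule prod.reindex_bij_witness[of _ "\<lambda>w. z * w" "\<lambda>w. w / z"]) (use assms in auto)
  also have "\<dots> = z ^ card ?G * (\<Prod>w\<in>?G. w)"
    by (simp add: prod.distrib)
  finally have "z ^ card ?G = 1"
    by simp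
  then show ?thesis
    by (simp add: card_Diff_singleton)
qed

lemma power_eq_power_if_cong_card_minus_one:
  fixes z :: "'a::{field,finite}"
  assumes "n1 > 0" "n2 > 0" "[n1 = n2] (mod (card (UNIV::'a set) - 1))"
  shows "z ^ n1 = z ^ n2"
proof (cases "z = 0")
  case False
  define m where "m = card (UNIV::'a set) - 1"
  have reduce: "z ^ k = z ^ (k mod m)" for k
  proof -
    have "z ^ k = (z ^ m) ^ (k div m) * z ^ (k mod m)"
      by (simp only: power_mult [symmetric] power_add [symmetric] mult_div_mod_eq)
    then show ?thesis
      using power_card_minus_one_eq_1[OF False] by (simp add: m_def)
  qed
  have "n1 mod m = n2 mod m"
    using assms(3) by (simp add: cong_def m_def)
  then show ?thesis
    using reduce[of n1] reduce[of n2] by simp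
qed (use assms in \<open>simp add: zero_power\<close>)

lemma CHAR_eq_if_card_eq_prime_power:
  assumes "prime p" "card (UNIV::'a::{field,finite} set) = p ^ k"
  shows "CHAR('a) = p"
proof -
  have "prime CHAR('a)"
    by (intro prime_CHAR_semidom finite_imp_CHAR_pos) simp
  moreover have "CHAR('a) dvd p ^ k"
    using CHAR_dvd_CARD assms(2) by metis
  ultimately show ?thesis
    using assms(1) by (meson prime_dvd_power primes_dvd_imp_eq)
qed

lemma of_nat_power_CHAR_power:
  assumes "prime CHAR('a::comm_semiring_1)"
  shows "(of_nat m :: 'a) ^ (CHAR('a) ^ e) = of_nat m"
proof (induction m)
  case (Suc m)
  then show ?case
    using freshmans_dream'[OF assms, of _ e "of_nat m" 1] by (simp add: add.commute)
qed (use prime_gt_0_nat[OF assms] in \<open>simp add: power_0_left\<close>)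

lemma card_roots_of_unity_le:
  assumes "n > 0"
  shows "card {z::'a::idom. z ^ n = 1} \<le> n"
proof -
  let ?P = "Polynomial.monom (1::'a) n - 1"
  have poly_P: "poly ?P z = z ^ n - 1" for z
    by (simp add: poly_monom)
  have "?P \<noteq> 0"
  proof
    assume "?P = 0"
    then have "poly ?P 0 = 0"
      by simp
    then show False
      using assms by (simp add: poly_monom zero_power)
  qed
  moreover have "degree ?P \<le> n"
    by (simp add: degree_diff_le degree_monom_le)
  ultimately show ?thesis
    using poly_P card_poly_roots_bound[of ?P] by simp
qed

lemma card_nonzero_squares_ge:
  "card (UNIV::'a::{field,finite} set) - 1 \<le> 2 * card ((\<lambda>z. z ^ 2) ` (UNIV - {0::'a}))"
proof -
  let ?Sq = "(\<lambda>z. z ^ 2) ` (UNIV - {0::'a})"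
  have "card (UNIV - {0::'a}) \<le> card (\<Union>w\<in>?Sq. {z. z ^ 2 = w})"
    by (intro card_mono) auto
  also have "\<dots> \<le> (\<Sum>w\<in>?Sq. card {z. z ^ 2 = w})"
    by (rule card_UN_le) simp
  also have "\<dots> \<le> (\<Sum>w\<in>?Sq. 2)"
  proof (rule sum_mono)
    fix w assume "w \<in> ?Sq"
    then obtain s where "w = s ^ 2"
      by auto
    then have "{z. z ^ 2 = w} = {s, -s}"
      by (auto simp: power2_eq_iff)
    then show "card {z. z ^ 2 = w} \<le> 2"
      by (simp add: card_insert_if)
  qed
  finally show ?thesis
    by (simp add: card_Diff_singleton mult.commute)
qed

lemma ex_square_root_if_power_half_card:
  fixes d :: "'a::{field,finite}"
  assumes odd: "odd (card (UNIV::'a set))"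
    and d: "d ^ ((card (UNIV::'a set) - 1) div 2) = 1"
  shows "\<exists>s. s ^ 2 = d"
proof -
  define h where "h = (card (UNIV::'a set) - 1) div 2"
  let ?Sq = "(\<lambda>z. z ^ 2) ` (UNIV - {0::'a})"
  have "card {0::'a, 1} \<le> card (UNIV::'a set)"
    by (rule card_mono) auto
  then have card: "card (UNIV::'a set) - 1 = 2 * h" "h > 0"
    using odd unfolding h_def by (auto elim!: oddE)
  have sub: "?Sq \<subseteq> {w. w ^ h = 1}"
  proof
    fix w assume "w \<in> ?Sq"
    then obtain z where z: "z \<noteq> 0" "w = z ^ 2"
      by auto
    then have "w ^ h = z ^ (card (UNIV::'a set) - 1)"
      unfolding card(1) by (simp add: power_mult)
    then show "w \<in> {w. w ^ h = 1}"
      using power_card_minus_one_eq_1[OF z(1)] by simp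
  qed
  moreover have "card {w::'a. w ^ h = 1} \<le> card ?Sq"
    using card_roots_of_unity_le[OF card(2), where 'a = 'a] card_nonzero_squares_ge[where 'a = 'a]
      card(1) by linarith
  ultimately have "?Sq = {w. w ^ h = 1}"
    using card_mono[OF _ sub] by (intro card_subset_eq) auto
  then have "d \<in> ?Sq"
    using d by (simp add: h_def)
  then show ?thesis
    by blast
qed

lemma (in comm_ring_1) freshmans_dream_diff:
  assumes "prime CHAR('a)" and "m = CHAR('a) ^ n"
  shows "(x - y :: 'a) ^ m = x ^ m - y ^ m"
  using freshmans_dream'[OF assms, of "x - y" y] by (simp add: eq_diff_eq)

lemma ex_square_root_if_power_eq_self:
  fixes d :: "'a::{field,finite}"
  assumes card: "card (UNIV::'a set) = q ^ 2" and "odd q" and "d ^ q = d"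
  shows "\<exists>s. s ^ 2 = d"
proof (cases "d = 0")
  case False
  obtain r where r: "q = Suc (2 * r)"
    using \<open>odd q\<close> by (auto elim: oddE)
  have "d * d ^ (2 * r) = d * 1"
    using \<open>d ^ q = d\<close> r by simp
  then have "d ^ (2 * r) = 1"
    using False by (metis mult_left_cancel)
  moreover have "(card (UNIV::'a set) - 1) div 2 = 2 * r * (r + 1)"
    unfolding card r by (simp add: power2_eq_square algebra_simps)
  then have "d ^ ((card (UNIV::'a set) - 1) div 2) = (d ^ (2 * r)) ^ (r + 1)"
    by (simp only: power_mult)
  ultimately have "d ^ ((card (UNIV::'a set) - 1) div 2) = 1"
    by simp
  with card \<open>odd q\<close> show ?thesis
    by (intro ex_square_root_if_power_half_card) simp_all
qed auto

lemma two_neq_zero_if_CHAR_neq_2: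
  assumes "prime CHAR('a::semiring_1)" and "CHAR('a) \<noteq> 2"
  shows "(2::'a) \<noteq> 0"
proof -
  have "\<not> CHAR('a) dvd 2"
    using prime_ge_2_nat[OF assms(1)] assms(2) by (auto dest: dvd_imp_le)
  then show ?thesis
    using of_nat_eq_0_iff_char_dvd[of 2, where 'a = 'a] by simp
qed

lemma ex_mult_one_minus_eq:
  fixes x :: "'a::{field,finite}"
  assumes card: "card (UNIV::'a set) = q ^ 2" and q: "q = CHAR('a) ^ e"
    and "CHAR('a) \<noteq> 2" and "x ^ q = x" and "x \<noteq> 1/4"
  shows "\<exists>y. 2 * y \<noteq> 1 \<and> x = y * (1 - y)"
proof -
  have prime: "prime CHAR('a)"
    by (intro prime_CHAR_semidom finite_imp_CHAR_pos) simp
  then have "odd CHAR('a)"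
    using prime_ge_2_nat[OF prime] \<open>CHAR('a) \<noteq> 2\<close> by (intro prime_odd_nat) auto
  then have "odd q"
    using q by simp
  have two: "(2::'a) \<noteq> 0"
    using prime \<open>CHAR('a) \<noteq> 2\<close> by (rule two_neq_zero_if_CHAR_neq_2)
  have "(1 - of_nat 4 * x) ^ q = 1 - of_nat 4 * x"
    using freshmans_dream_diff[OF prime q] of_nat_power_CHAR_power[OF prime, of 4 e] q \<open>x ^ q = x\<close>
    by (simp add: power_mult_distrib)
  then obtain s where s: "s ^ 2 = 1 - 4 * x"
    using ex_square_root_if_power_eq_self[OF card \<open>odd q\<close>] by auto
  have four: "(4::'a) \<noteq> 0"
    using two by (metis mult_2 mult_eq_0_iff numeral_Bit0)
  then have "s \<noteq> 0"
    using s \<open>x \<noteq> 1/4\<close> by (auto simp: field_simps)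
  define y where "y = (1 + s) / 2"
  have "2 * y \<noteq> 1"
    using \<open>s \<noteq> 0\<close> two by (simp add: y_def)
  moreover have "x = y * (1 - y)"
    using s two four by (simp add: y_def field_simps power2_eq_square)
  ultimately show ?thesis
    by blast
qed

theorem theorem2p4:
  fixes p e q :: nat
  assumes "prime p" and "p > 3" and "e \<ge> 1" and "q = p ^ e"
    and "card (UNIV :: 'a::{field,finite} set) = q ^ 2"
  shows "(\<forall>n::nat. D3 n (1::'a) (1/4) = of_int (3 * int n - 1) / 2 ^ n)
       \<and> (\<forall>n::nat. \<forall>y::'a. y \<noteq> 1/2 \<longrightarrow>
            D3 n 1 (y * (1 - y)) = ((2 - y) * y ^ n - (y + 1) * (1 - y) ^ n) / (2 * y - 1))
       \<and> (\<forall>n1 n2 :: nat. \<forall>x0::'a. n1 > 0 \<longrightarrow> n2 > 0 \<longrightarrow> [n1 = n2] (mod (q ^ 2 - 1))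
            \<longrightarrow> x0 ^ q = x0 \<longrightarrow> x0 \<noteq> 1/4 \<longrightarrow> D3 n1 1 x0 = D3 n2 1 x0)"
proof -
  have char: "CHAR('a) = p"
    using assms(1,4,5) by (intro CHAR_eq_if_card_eq_prime_power[where k = "e * 2"])
      (simp_all add: power_mult)
  then have two: "(2::'a) \<noteq> 0"
    using assms(1,2) by (intro two_neq_zero_if_CHAR_neq_2) auto
  show ?thesis
  proof (intro conjI allI impI)
    fix n
    show "D3 n (1::'a) (1/4) = of_int (3 * int n - 1) / 2 ^ n"
      using two by (rule D3_one_quarter)
  next
    fix n and y :: 'a
    assume "y \<noteq> 1/2"
    then have "2 * y \<noteq> 1"
      using two by (auto simp: field_simps)
    then show "D3 n 1 (y * (1 - y)) = ((2 - y) * y ^ n - (y + 1) * (1 - y) ^ n) / (2 * y - 1)"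
      by (rule D3_mult_one_minus)
  next
    fix n1 n2 :: nat and x0 :: 'a
    assume "n1 > 0" "n2 > 0" "[n1 = n2] (mod (q ^ 2 - 1))" "x0 ^ q = x0" "x0 \<noteq> 1/4"
    moreover obtain y where "2 * y \<noteq> 1" "x0 = y * (1 - y)"
      using ex_mult_one_minus_eq[of q e x0] assms(2,4,5) char \<open>x0 ^ q = x0\<close> \<open>x0 \<noteq> 1/4\<close>
      by auto
    ultimately show "D3 n1 1 x0 = D3 n2 1 x0"
      using power_eq_power_if_cong_card_minus_one[of n1 n2 y]
        power_eq_power_if_cong_card_minus_one[of n1 n2 "1 - y"] assms(5)
      by (simp add: D3_mult_one_minus)
  qed
qed

end
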